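(* Let $\beta:=\frac{1}{2\pi}\int_{-\infty}^{\infty}\prod_{k=1}^\infty\frac{k^{2\alpha}}{k^{2\alpha}+t^2}\,dt$, which is a finite positive constant depending only on $\alpha$. Then as $i,j\to\infty$, \[ \Pr[BINGO(i,j)]\sim\beta\,\bigl(i^{-\alpha}+j^{-\alpha}\bigr). \] In particular $\Pr[BINGO(n,n)]\sim 2\beta n^{-\alpha}$ as $n\to\infty$.
   Context: Fix $\alpha>1$. Let $(X_k,Y_k)_{k\ge2}$ be the Markov chain on $\mathbb N\times\mathbb N$ with $(X_2,Y_2)=(1,1)$ and, from state $(i,j)$, moving to $(i+1,j)$ with probability $i^\alpha/(i^\alpha+j^\alpha)$ and to $(i,j+1)$ with probability $j^\alpha/(i^\alpha+j^\alpha)$. $BINGO(i,j)$ is the event that the chain visits the state $(i,j)$. *)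

theory Defs
  imports "HOL-Probability.Probability" "HOL-Library.Landau_Symbols"
begin

definition urn_step :: "real \<Rightarrow> nat \<times> nat \<Rightarrow> (nat \<times> nat) pmf" where
  "urn_step \<alpha> s = (case s of (i, j) \<Rightarrow>
     map_pmf (\<lambda>b. if b then (i + 1, j) else (i, j + 1))
       (bernoulli_pmf (real i powr \<alpha> / (real i powr \<alpha> + real j powr \<alpha>))))"

text \<open>Distribution of the trajectory (X_2, ..., X_n) as a list of states (for n >= 2);
  the chain starts at (X_2, Y_2) = (1,1).\<close>
fun urn_paths :: "real \<Rightarrow> nat \<Rightarrow> (nat \<times> nat) list pmf" where
  "urn_paths \<alpha> 0 = return_pmf [(1, 1)]"
| "urn_paths \<alpha> (Suc 0) = return_pmf [(1, 1)]"
| "urn_paths \<alpha> (Suc (Suc 0)) = return_pmf [(1, 1)]"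
| "urn_paths \<alpha> (Suc (Suc (Suc n))) =
     bind_pmf (urn_paths \<alpha> (Suc (Suc n)))
       (\<lambda>xs. map_pmf (\<lambda>s. xs @ [s]) (urn_step \<alpha> (last xs)))"

text \<open>Pr[BINGO(i,j)]: probability that the chain ever visits (i,j), as the limit (supremum)
  of the probabilities of visiting (i,j) by time n.\<close>
definition bingo_prob :: "real \<Rightarrow> nat \<Rightarrow> nat \<Rightarrow> real" where
  "bingo_prob \<alpha> i j = (SUP n. measure_pmf.prob (urn_paths \<alpha> n) {xs. (i, j) \<in> set xs})"

definition bingo_beta :: "real \<Rightarrow> real" where
  "bingo_beta \<alpha> = 1 / (2 * pi) *
     (LINT t|lborel. (\<Prod>k. real (Suc k) powr (2 * \<alpha>) / (real (Suc k) powr (2 * \<alpha>) + t\<^sup>2)))"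

end

theory Submission
  imports Defs
begin

text \<open>
  Rubin's construction embeds the walk in continuous time: the first coordinate advances at the
  arrival times of a renewal process with independent exponential gaps of rates
  \<open>c\<^sub>k = (k + 1)\<^sup>\<alpha>\<close>, the second at those of an independent copy.  Reading off when the two
  processes interleave gives the Fourier representation
  \<open>2\<pi> Pr[BINGO(u+1, v+1)] = \<integral> \<phi>\<^sub>u\<^sub>+\<^sub>1 \<phi>\<^sub>v\<^sup>* / c\<^sub>u + \<phi>\<^sub>u \<phi>\<^sub>v\<^sub>+\<^sub>1\<^sup>* / c\<^sub>v dt\<close>, where \<open>\<phi>\<^sub>m\<close> is the
  characteristic function of the sum of the first \<open>m\<close> gaps.  Instead of formalising the embedding
  we check that the right-hand side obeys the recursion of the visiting probabilities; the boundary
  terms are integrals of products of at least two distinct factors \<open>1 / (c\<^sub>k - i t)\<close>, which vanish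
  by partial fractions.  As \<open>\<Sum> 1 / c\<^sub>k < \<infinity>\<close>, \<open>\<phi>\<^sub>m\<close> converges in \<open>L\<^sup>1\<close> to \<open>\<phi>\<^sub>\<infinity>\<close>, so both
  integrals tend to \<open>\<integral> |\<phi>\<^sub>\<infinity>|\<^sup>2 = 2\<pi>\<beta>\<close>, and the weights \<open>i\<^sup>-\<^sup>\<alpha>\<close>, \<open>j\<^sup>-\<^sup>\<alpha>\<close> combine the two terms
  convexly.
\<close>

section \<open>Integrals over the real line\<close>

lemma
  shows integrable_inverse_1_plus_square_lborel: "integrable lborel (\<lambda>x::real. 1 / (1 + x\<^sup>2))"
    and lborel_integral_inverse_1_plus_square: "(LINT x|lborel. 1 / (1 + x\<^sup>2)) = pi"
proof -
  have UNIV: "einterval (-\<infinity>) \<infinity> = UNIV" by (auto simp: einterval_def)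
  show "integrable lborel (\<lambda>x::real. 1 / (1 + x\<^sup>2))"
    using integrable_inverse_1_plus_square unfolding UNIV set_integrable_def
    by (simp add: divide_inverse)
  show "(LINT x|lborel. 1 / (1 + x\<^sup>2)) = pi"
    using LBINT_inverse_1_plus_square
    unfolding interval_lebesgue_integral_def UNIV set_lebesgue_integral_def
    by (simp add: divide_inverse)
qed

lemma
  fixes a :: real
  assumes "0 < a"
  shows integrable_inverse_sq_plus_square_lborel: "integrable lborel (\<lambda>x. 1 / (a\<^sup>2 + x\<^sup>2))"
    and lborel_integral_inverse_sq_plus_square: "(LINT x|lborel. 1 / (a\<^sup>2 + x\<^sup>2)) = pi / a"
proof -
  have rescale: "1 / (a\<^sup>2 + (0 + a * x)\<^sup>2) = 1 / a\<^sup>2 * (1 / (1 + x\<^sup>2))" for x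
    using assms by (simp add: field_simps power_mult_distrib)
  have "integrable lborel (\<lambda>x. 1 / (a\<^sup>2 + (0 + a * x)\<^sup>2))"
    unfolding rescale by (intro integrable_mult_right integrable_inverse_1_plus_square_lborel)
  then show "integrable lborel (\<lambda>x. 1 / (a\<^sup>2 + x\<^sup>2))"
    using lborel_integrable_real_affine_iff[of a "\<lambda>x. 1 / (a\<^sup>2 + x\<^sup>2)" 0] assms by simp
  have "(LINT x|lborel. 1 / (a\<^sup>2 + x\<^sup>2)) = \<bar>a\<bar> *\<^sub>R (LINT x|lborel. 1 / (a\<^sup>2 + (0 + a * x)\<^sup>2))"
    using assms by (intro lborel_integral_real_affine) simp
  also have "\<dots> = a * (1 / a\<^sup>2 * pi)"
    using assms by (simp only: rescale integral_mult_right_zero lborel_integral_inverse_1_plus_square) simp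
  also have "\<dots> = pi / a"
    using assms by (simp add: power2_eq_square)
  finally show "(LINT x|lborel. 1 / (a\<^sup>2 + x\<^sup>2)) = pi / a" .
qed

lemma lborel_integral_odd_eq_0:
  fixes g :: "real \<Rightarrow> real"
  assumes "\<And>x. g (- x) = - g x"
  shows "(LINT x|lborel. g x) = 0"
proof -
  have "(LINT x|lborel. g x) = \<bar>-1\<bar> *\<^sub>R (LINT x|lborel. g (0 + (-1) * x))"
    by (intro lborel_integral_real_affine) simp
  also have "\<dots> = - (LINT x|lborel. g x)"
    using assms by simp
  finally show ?thesis by simp
qed

lemma lborel_integral_pos:
  fixes f :: "real \<Rightarrow> real"
  assumes "integrable lborel f" "\<And>x. 0 < f x"
  shows "0 < (LINT x|lborel. f x)"
proof -
  have nonneg: "AE x in lborel. 0 \<le> f x"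
    using assms(2) less_imp_le by auto
  have "(LINT x|lborel. f x) \<noteq> 0"
  proof
    assume "(LINT x|lborel. f x) = 0"
    then have "AE x in lborel. f x = 0"
      using integral_nonneg_eq_0_iff_AE[OF assms(1) nonneg] by simp
    then have "AE x in (lborel :: real measure). False"
      using assms(2) by (auto elim: AE_mp simp: less_le)
    then have "emeasure (lborel :: real measure) {x \<in> space lborel. \<not> False} = 0"
      by (rule AE_E2)
    then show False
      by simp
  qed
  then show ?thesis
    using integral_nonneg_AE[OF nonneg] by simp
qed

section \<open>The Fourier transform of the exponential density\<close>

text \<open>The Fourier transform \<open>\<integral>\<^sub>0\<^sup>\<infinity> e\<^sup>-\<^sup>a\<^sup>x e\<^sup>i\<^sup>t\<^sup>x dx\<close>; so \<open>a * exp_fourier a\<close>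
  is the characteristic function of the exponential distribution with rate \<open>a\<close>.\<close>
definition exp_fourier :: "real \<Rightarrow> real \<Rightarrow> complex" where
  "exp_fourier a t = 1 / (of_real a - \<i> * of_real t)"

lemma exp_fourier_denominator_nonzero: "0 < a \<Longrightarrow> of_real a - \<i> * of_real t \<noteq> 0"
  by (auto simp: complex_eq_iff)

lemma norm_exp_fourier: "norm (exp_fourier a t) = 1 / sqrt (a\<^sup>2 + t\<^sup>2)"
proof -
  have "norm (of_real a - \<i> * of_real t) = sqrt (a\<^sup>2 + t\<^sup>2)"
    by (simp add: cmod_def)
  then show ?thesis
    by (simp add: exp_fourier_def norm_divide)
qed

lemma Re_exp_fourier: "Re (exp_fourier a t) = a / (a\<^sup>2 + t\<^sup>2)"
  and Im_exp_fourier: "Im (exp_fourier a t) = t / (a\<^sup>2 + t\<^sup>2)"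
  by (simp_all add: exp_fourier_def Re_divide Im_divide power2_eq_square)

lemma borel_measurable_exp_fourier [measurable]: "exp_fourier a \<in> borel_measurable borel"
  unfolding exp_fourier_def by measurable

lemma norm_scaled_exp_fourier_le_1:
  assumes "0 < a"
  shows "norm (of_real a * exp_fourier a t) \<le> 1"
proof -
  have "a \<le> sqrt (a\<^sup>2 + t\<^sup>2)"
    using assms by (simp add: real_le_rsqrt)
  moreover have "\<not> a\<^sup>2 + t\<^sup>2 < 0"
    by (simp add: not_less)
  ultimately show ?thesis
    using assms by (simp add: norm_mult norm_exp_fourier divide_simps)
qed

lemma norm_exp_fourier_le_1:
  assumes "1 \<le> a"
  shows "norm (exp_fourier a t) \<le> 1"
proof -
  have "norm (exp_fourier a t) \<le> a * norm (exp_fourier a t)"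
    using assms by (simp add: mult_le_cancel_right1)
  also have "\<dots> \<le> 1"
    using norm_scaled_exp_fourier_le_1[of a t] assms by (simp add: norm_mult)
  finally show ?thesis .
qed

lemma norm_exp_fourier_mult_le:
  assumes "1 \<le> a" "1 \<le> b"
  shows "norm (exp_fourier a t) * norm (exp_fourier b t) \<le> 1 / (1 + t\<^sup>2)"
proof -
  have "1 + t\<^sup>2 = sqrt (1 + t\<^sup>2) * sqrt (1 + t\<^sup>2)"
    by simp
  also have "\<dots> \<le> sqrt (a\<^sup>2 + t\<^sup>2) * sqrt (b\<^sup>2 + t\<^sup>2)"
    using assms by (intro mult_mono) (auto simp: one_le_power)
  finally have "1 + t\<^sup>2 \<le> sqrt (a\<^sup>2 + t\<^sup>2) * sqrt (b\<^sup>2 + t\<^sup>2)" .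
  moreover have "0 < 1 + t\<^sup>2"
    by (simp add: add_pos_nonneg)
  ultimately show ?thesis
    unfolding norm_exp_fourier by (simp add: divide_simps)
qed

lemma cnj_exp_fourier: "cnj (exp_fourier a t) = 1 / (of_real a + \<i> * of_real t)"
  by (simp add: exp_fourier_def complex_cnj_divide)

lemma exp_fourier_add_cnj:
  assumes "0 < a" "0 < b"
  shows "exp_fourier a t + cnj (exp_fourier b t) = of_real (a + b) * exp_fourier a t * cnj (exp_fourier b t)"
proof -
  have "of_real a - \<i> * of_real t \<noteq> 0" "of_real b + \<i> * of_real t \<noteq> 0"
    using assms by (auto simp: complex_eq_iff)
  then show ?thesis
    unfolding cnj_exp_fourier exp_fourier_def by (simp add: field_simps)
qed

lemma borel_measurable_cnj [measurable]:
  "f \<in> borel_measurable M \<Longrightarrow> (\<lambda>x. cnj (f x)) \<in> borel_measurable M"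
  by (rule borel_measurable_continuous_on[where f = cnj]) (auto intro: continuous_intros)

lemma norm_scaled_exp_fourier_minus_1_le:
  assumes "0 < a"
  shows "norm (of_real a * exp_fourier a t - 1) \<le> \<bar>t\<bar> / a"
proof -
  have "of_real a * exp_fourier a t - 1 = \<i> * of_real t * exp_fourier a t"
    using exp_fourier_denominator_nonzero[OF assms] by (simp add: exp_fourier_def field_simps)
  then have "norm (of_real a * exp_fourier a t - 1) = \<bar>t\<bar> * (1 / sqrt (a\<^sup>2 + t\<^sup>2))"
    by (simp add: norm_mult norm_exp_fourier)
  also have "\<dots> \<le> \<bar>t\<bar> * (1 / a)"
  proof (intro mult_left_mono divide_left_mono)
    show "a \<le> sqrt (a\<^sup>2 + t\<^sup>2)"
      using assms by (simp add: real_le_rsqrt)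
    then show "0 < sqrt (a\<^sup>2 + t\<^sup>2) * a"
      using assms by (metis less_le_trans mult_pos_pos)
  qed auto
  finally show ?thesis
    by simp
qed

lemma square_ratio_minus_1_le:
  fixes a t :: real
  assumes "1 \<le> a"
  shows "\<bar>a\<^sup>2 / (a\<^sup>2 + t\<^sup>2) - 1\<bar> \<le> t\<^sup>2 / a"
proof -
  have "a \<le> a\<^sup>2"
    using assms by (simp add: power2_eq_square)
  then have "a \<le> a\<^sup>2 + t\<^sup>2"
    by (simp add: add_increasing2)
  moreover have "\<bar>a\<^sup>2 / (a\<^sup>2 + t\<^sup>2) - 1\<bar> = t\<^sup>2 / (a\<^sup>2 + t\<^sup>2)"
    using assms by (simp add: field_simps add_pos_nonneg)
  ultimately show ?thesis
    using assms by (simp add: frac_le)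
qed

lemma borel_measurable_prod_exp_fourier [measurable]:
  "(\<lambda>t. \<Prod>k\<in>S. exp_fourier (c k) t) \<in> borel_measurable borel"
  by (rule borel_measurable_prod) simp

lemma prod_remove_two:
  fixes f :: "'a \<Rightarrow> 'b::comm_monoid_mult"
  assumes "finite S" "a \<in> S" "b \<in> S" "a \<noteq> b"
  shows "prod f S = f a * f b * prod f (S - {a} - {b})"
proof -
  have "prod f S = f a * prod f (S - {a})"
    using assms by (simp add: prod.remove)
  also have "prod f (S - {a}) = f b * prod f (S - {a} - {b})"
    using assms by (intro prod.remove) auto
  finally show ?thesis
    by (simp only: mult.assoc)
qed

lemma norm_prod_exp_fourier_le:
  assumes "finite S" "2 \<le> card S" "\<And>k. k \<in> S \<Longrightarrow> 1 \<le> c k"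
  shows "norm (\<Prod>k\<in>S. exp_fourier (c k) t) \<le> 1 / (1 + t\<^sup>2)"
proof -
  obtain a b where ab: "a \<in> S" "b \<in> S" "a \<noteq> b"
    using assms(1,2) card_le_Suc0_iff_eq[of S] by force
  have "(\<Prod>k\<in>S. exp_fourier (c k) t)
      = exp_fourier (c a) t * exp_fourier (c b) t * (\<Prod>k\<in>S-{a}-{b}. exp_fourier (c k) t)"
    using assms(1) ab by (rule prod_remove_two)
  then have "norm (\<Prod>k\<in>S. exp_fourier (c k) t)
      = norm (exp_fourier (c a) t) * norm (exp_fourier (c b) t) * (\<Prod>k\<in>S-{a}-{b}. norm (exp_fourier (c k) t))"
    by (simp add: norm_mult prod_norm)
  also have "\<dots> \<le> norm (exp_fourier (c a) t) * norm (exp_fourier (c b) t)"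
    using assms(3) by (intro mult_left_le prod_le_1) (auto intro: norm_exp_fourier_le_1)
  also have "\<dots> \<le> 1 / (1 + t\<^sup>2)"
    using assms(3) ab by (intro norm_exp_fourier_mult_le) auto
  finally show ?thesis .
qed

lemma integrable_prod_exp_fourier:
  assumes "finite S" "2 \<le> card S" "\<And>k. k \<in> S \<Longrightarrow> 1 \<le> c k"
  shows "integrable lborel (\<lambda>t. \<Prod>k\<in>S. exp_fourier (c k) t)"
proof (rule Bochner_Integration.integrable_bound[OF integrable_inverse_1_plus_square_lborel])
  show "AE t in lborel. norm (\<Prod>k\<in>S. exp_fourier (c k) t) \<le> norm (1 / (1 + t\<^sup>2))"
    using norm_prod_exp_fourier_le[OF assms] by (simp add: add_pos_nonneg)
qed measurable

lemma exp_fourier_mult_partial_fractions: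
  assumes "0 < a" "0 < b" "a \<noteq> b"
  shows "exp_fourier a t * exp_fourier b t = (exp_fourier a t - exp_fourier b t) / of_real (b - a)"
proof -
  define x where "x = of_real a - \<i> * of_real t"
  define y where "y = of_real b - \<i> * of_real t"
  have "y - x = of_real (b - a)"
    unfolding x_def y_def by simp
  moreover have "x \<noteq> 0" "y \<noteq> 0" "y - x \<noteq> 0"
    using exp_fourier_denominator_nonzero assms calculation unfolding x_def y_def by auto
  then have "1 / x * (1 / y) = (1 / x - 1 / y) / (y - x)"
    by (simp add: field_simps)
  ultimately show ?thesis
    unfolding exp_fourier_def x_def[symmetric] y_def[symmetric] by simp
qed

lemma lborel_integral_exp_fourier_mult_eq_0:
  assumes a: "1 \<le> a" and b: "1 \<le> b" and "a \<noteq> b"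
  shows "(LINT t|lborel. exp_fourier a t * exp_fourier b t) = 0"
proof -
  have pos: "0 < a" "0 < b"
    using a b by auto
  have int: "integrable lborel (\<lambda>t. exp_fourier a t * exp_fourier b t)"
    using integrable_prod_exp_fourier[of "{a, b}" id] assms by fastforce
  have Re: "Re (exp_fourier a t * exp_fourier b t) = (a * (1 / (a\<^sup>2 + t\<^sup>2)) - b * (1 / (b\<^sup>2 + t\<^sup>2))) / (b - a)" for t
    using assms
    unfolding exp_fourier_mult_partial_fractions[OF pos \<open>a \<noteq> b\<close>] Re_divide_of_real minus_complex.sel Re_exp_fourier
    by simp
  have "(LINT t|lborel. Re (exp_fourier a t * exp_fourier b t))
      = ((LINT t|lborel. a * (1 / (a\<^sup>2 + t\<^sup>2))) - (LINT t|lborel. b * (1 / (b\<^sup>2 + t\<^sup>2)))) / (b - a)"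
    unfolding Re integral_divide_zero
    by (intro arg_cong2[where f = "(/)"] Bochner_Integration.integral_diff refl integrable_mult_right
        integrable_inverse_sq_plus_square_lborel pos)
  also have "\<dots> = (a * (pi / a) - b * (pi / b)) / (b - a)"
    using pos by (simp only: integral_mult_right_zero lborel_integral_inverse_sq_plus_square)
  also have "\<dots> = 0"
    using assms by simp
  finally have "Re (LINT t|lborel. exp_fourier a t * exp_fourier b t) = 0"
    using integral_Re[OF int] by simp
  moreover have "Im (LINT t|lborel. exp_fourier a t * exp_fourier b t) = 0"
    unfolding integral_Im[OF int, symmetric]
    by (rule lborel_integral_odd_eq_0) (simp add: Re_exp_fourier Im_exp_fourier)
  ultimately show ?thesis
    by (simp add: complex_eq_iff)
qed

text \<open>Partial fractions split the product over \<open>S\<close> into two products over sets with one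
  element fewer, so the claim reduces to the case of two factors.\<close>
lemma lborel_integral_prod_exp_fourier_eq_0:
  assumes "finite S" "2 \<le> card S" "inj_on c S" "\<And>k. k \<in> S \<Longrightarrow> 1 \<le> c k"
  shows "(LINT t|lborel. (\<Prod>k\<in>S. exp_fourier (c k) t)) = 0"
  using assms
proof (induction "card S" arbitrary: S rule: less_induct)
  case less
  obtain a b where ab: "a \<in> S" "b \<in> S" "a \<noteq> b"
    using less.prems(1,2) card_le_Suc0_iff_eq[of S] by force
  have c_ab: "c a \<noteq> c b" "0 < c a" "0 < c b"
    using less.prems(3,4) ab by (auto dest: inj_onD[of c S a b] less.prems(4))
  show ?case
  proof (cases "card S = 2")
    case True
    then have "S = {a, b}"
      using ab less.prems(1) card_subset_eq[of S "{a, b}"] by auto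
    then show ?thesis
      using ab c_ab less.prems(4) lborel_integral_exp_fourier_mult_eq_0[of "c a" "c b"] by simp
  next
    case False
    let ?P = "\<lambda>T t. \<Prod>k\<in>T. exp_fourier (c k) t"
    have smaller: "card (S - {a}) < card S" "2 \<le> card (S - {a})"
      "card (S - {b}) < card S" "2 \<le> card (S - {b})"
      using ab less.prems(1,2) False by (auto simp: card_gt_0_iff)
    have split: "?P S t = (?P (S - {b}) t - ?P (S - {a}) t) / of_real (c b - c a)" for t
    proof -
      have "?P S t = exp_fourier (c a) t * exp_fourier (c b) t * ?P (S - {a} - {b}) t"
        using less.prems(1) ab by (rule prod_remove_two)
      moreover have "?P (S - {b}) t = exp_fourier (c a) t * ?P (S - {b} - {a}) t"
        using ab less.prems(1) by (intro prod.remove) auto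
      moreover have "?P (S - {a}) t = exp_fourier (c b) t * ?P (S - {a} - {b}) t"
        using ab less.prems(1) by (intro prod.remove) auto
      moreover have "S - {b} - {a} = S - {a} - {b}"
        by blast
      ultimately show ?thesis
        using exp_fourier_mult_partial_fractions[of "c a" "c b" t] c_ab by (simp add: field_simps)
    qed
    have "integrable lborel (?P (S - {a}))" "integrable lborel (?P (S - {b}))"
      using less.prems smaller by (auto intro: integrable_prod_exp_fourier)
    moreover have "(LINT t|lborel. ?P (S - {a}) t) = 0" "(LINT t|lborel. ?P (S - {b}) t) = 0"
      using less.prems smaller by (auto intro!: less.hyps inj_on_subset[of c S])
    ultimately show ?thesis
      unfolding split by simp
  qed
qed

section \<open>Fourier representation of the visiting probabilities\<close>

locale rate_sequence =
  fixes c :: "nat \<Rightarrow> real"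
  assumes rate_ge_1: "\<And>k. 1 \<le> c k"
    and inj_rate: "inj c"
begin

lemma rate_pos: "0 < c k"
  using rate_ge_1[of k] by simp

text \<open>\<open>visit_prob u v\<close> is the probability that the walk on \<open>\<nat>\<^sub>+ \<times> \<nat>\<^sub>+\<close> started at \<open>(1, 1)\<close>,
  which steps from \<open>(i, j)\<close> to \<open>(i + 1, j)\<close> with probability \<open>c (i - 1) / (c (i - 1) + c (j - 1))\<close>
  and to \<open>(i, j + 1)\<close> otherwise, visits \<open>(u + 1, v + 1)\<close>.\<close>
fun visit_prob :: "nat \<Rightarrow> nat \<Rightarrow> real" where
  "visit_prob 0 0 = 1"
| "visit_prob (Suc u) 0 = visit_prob u 0 * (c u / (c u + c 0))"
| "visit_prob 0 (Suc v) = visit_prob 0 v * (c v / (c 0 + c v))"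
| "visit_prob (Suc u) (Suc v) =
     visit_prob u (Suc v) * (c u / (c u + c (Suc v))) + visit_prob (Suc u) v * (c v / (c (Suc u) + c v))"

text \<open>The characteristic function of the sum of independent exponential variables with rates
  \<open>c 0, \<dots>, c (m - 1)\<close>, i.e.\ of the time of the \<open>m\<close>-th step of the first coordinate in
  Rubin's continuous-time embedding of the walk.\<close>
definition sum_exp_char :: "nat \<Rightarrow> real \<Rightarrow> complex" where
  "sum_exp_char m t = (\<Prod>k<m. of_real (c k) * exp_fourier (c k) t)"

lemma sum_exp_char_0 [simp]: "sum_exp_char 0 t = 1"
  by (simp add: sum_exp_char_def)

lemma sum_exp_char_Suc: "sum_exp_char (Suc m) t = sum_exp_char m t * (of_real (c m) * exp_fourier (c m) t)"
  by (simp add: sum_exp_char_def)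

lemma borel_measurable_sum_exp_char [measurable]: "sum_exp_char m \<in> borel_measurable borel"
  unfolding sum_exp_char_def by (rule borel_measurable_prod) simp

lemma norm_sum_exp_char_le_1: "norm (sum_exp_char m t) \<le> 1"
  unfolding sum_exp_char_def prod_norm[symmetric]
  by (intro prod_le_1) (auto intro: norm_scaled_exp_fourier_le_1 rate_pos)

lemma norm_sum_exp_char_antimono:
  assumes "n \<le> m"
  shows "norm (sum_exp_char m t) \<le> norm (sum_exp_char n t)"
  using assms
proof (induction m rule: dec_induct)
  case (step m)
  have "norm (sum_exp_char (Suc m) t) \<le> norm (sum_exp_char m t) * 1"
    unfolding sum_exp_char_Suc norm_mult[of "sum_exp_char m t"]
    by (intro mult_left_mono norm_scaled_exp_fourier_le_1 rate_pos) simp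
  with step.IH show ?case
    by simp
qed simp

lemma norm_sum_exp_char_mult_le:
  assumes "1 \<le> m" "1 \<le> n"
  shows "norm (sum_exp_char m t) * norm (sum_exp_char n t) \<le> (c 0)\<^sup>2 / (1 + t\<^sup>2)"
proof -
  have "norm (sum_exp_char m t) * norm (sum_exp_char n t) \<le> norm (sum_exp_char 1 t) * norm (sum_exp_char 1 t)"
    using assms by (intro mult_mono norm_sum_exp_char_antimono) auto
  also have "\<dots> = (c 0)\<^sup>2 * (norm (exp_fourier (c 0) t) * norm (exp_fourier (c 0) t))"
    using rate_pos[of 0] by (simp add: sum_exp_char_def norm_mult power2_eq_square)
  also have "\<dots> \<le> (c 0)\<^sup>2 * (1 / (1 + t\<^sup>2))"
    by (intro mult_left_mono norm_exp_fourier_mult_le rate_ge_1) simp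
  finally show ?thesis
    by simp
qed

lemma norm_sum_exp_char_le:
  assumes "2 \<le> m"
  shows "norm (sum_exp_char m t) \<le> c 0 * c 1 / (1 + t\<^sup>2)"
proof -
  have "norm (sum_exp_char m t) \<le> norm (sum_exp_char 2 t)"
    using assms by (rule norm_sum_exp_char_antimono)
  also have "\<dots> = c 0 * c 1 * (norm (exp_fourier (c 0) t) * norm (exp_fourier (c 1) t))"
    using rate_pos[of 0] rate_pos[of 1] by (simp add: sum_exp_char_def numeral_2_eq_2 norm_mult)
  also have "\<dots> \<le> c 0 * c 1 * (1 / (1 + t\<^sup>2))"
    using rate_pos[of 0] rate_pos[of 1]
    by (intro mult_left_mono norm_exp_fourier_mult_le rate_ge_1) simp
  finally show ?thesis
    by simp
qed

lemma integrable_sum_exp_char_mult_cnj: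
  assumes "1 \<le> m" "1 \<le> n"
  shows "integrable lborel (\<lambda>t. sum_exp_char m t * cnj (sum_exp_char n t))"
proof (rule Bochner_Integration.integrable_bound)
  show "integrable lborel (\<lambda>t. (c 0)\<^sup>2 * (1 / (1 + t\<^sup>2)))"
    by (intro integrable_mult_right integrable_inverse_1_plus_square_lborel)
  show "AE t in lborel. norm (sum_exp_char m t * cnj (sum_exp_char n t)) \<le> norm ((c 0)\<^sup>2 * (1 / (1 + t\<^sup>2)))"
    using norm_sum_exp_char_mult_le[OF assms] by (simp add: norm_mult add_pos_nonneg)
qed measurable

definition visit_kernel :: "nat \<Rightarrow> nat \<Rightarrow> real \<Rightarrow> complex" where
  "visit_kernel u v t =
     sum_exp_char u t * cnj (sum_exp_char v t) * (exp_fourier (c u) t + cnj (exp_fourier (c v) t))"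

lemma borel_measurable_visit_kernel [measurable]: "visit_kernel u v \<in> borel_measurable borel"
  unfolding visit_kernel_def by measurable

lemma norm_visit_kernel_le: "norm (visit_kernel u v t) \<le> (c u + c v) * (1 / (1 + t\<^sup>2))"
proof -
  have "norm (visit_kernel u v t) = norm (sum_exp_char u t) * norm (sum_exp_char v t)
      * ((c u + c v) * (norm (exp_fourier (c u) t) * norm (exp_fourier (c v) t)))"
    using rate_pos[of u] rate_pos[of v]
    by (simp add: visit_kernel_def exp_fourier_add_cnj norm_mult del: of_real_add)
  also have "\<dots> \<le> 1 * 1 * ((c u + c v) * (1 / (1 + t\<^sup>2)))"
    using rate_pos[of u] rate_pos[of v]
    by (intro mult_mono norm_sum_exp_char_le_1 norm_exp_fourier_mult_le rate_ge_1) auto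
  finally show ?thesis
    by simp
qed

lemma integrable_visit_kernel: "integrable lborel (visit_kernel u v)"
proof (rule Bochner_Integration.integrable_bound)
  show "integrable lborel (\<lambda>t. (c u + c v) * (1 / (1 + t\<^sup>2)))"
    by (intro integrable_mult_right integrable_inverse_1_plus_square_lborel)
  show "AE t in lborel. norm (visit_kernel u v t) \<le> norm ((c u + c v) * (1 / (1 + t\<^sup>2)))"
    using norm_visit_kernel_le rate_pos[of u] rate_pos[of v]
    by (simp add: norm_mult add_pos_nonneg)
qed measurable

lemma lborel_integral_visit_kernel_0_0: "(LINT t|lborel. visit_kernel 0 0 t) = of_real (2 * pi)"
proof -
  have "visit_kernel 0 0 t = of_real (2 * c 0 * (1 / ((c 0)\<^sup>2 + t\<^sup>2)))" for t
    by (simp add: visit_kernel_def complex_add_cnj Re_exp_fourier del: of_real_mult of_real_divide)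
  moreover have "(LINT t|lborel. 2 * c 0 * (1 / ((c 0)\<^sup>2 + t\<^sup>2))) = 2 * pi"
    using rate_pos[of 0]
    by (simp only: integral_mult_right_zero lborel_integral_inverse_sq_plus_square) simp
  ultimately show ?thesis
    by (simp only: integral_complex_of_real)
qed

lemma visit_kernel_right:
  "of_real (c u / (c u + c w)) * visit_kernel u w t
     = sum_exp_char (Suc u) t * cnj (sum_exp_char w t) * cnj (exp_fourier (c w) t)"
proof -
  have "complex_of_real (c u) + complex_of_real (c w) \<noteq> 0"
    using rate_pos[of u] rate_pos[of w] by (metis of_real_add of_real_eq_0_iff add_pos_pos less_irrefl)
  then show ?thesis
    using rate_pos[of u] rate_pos[of w]
    by (simp add: visit_kernel_def exp_fourier_add_cnj sum_exp_char_Suc field_simps)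
qed

lemma visit_kernel_up:
  "of_real (c v / (c w + c v)) * visit_kernel w v t
     = sum_exp_char w t * cnj (sum_exp_char (Suc v) t) * exp_fourier (c w) t"
proof -
  have "complex_of_real (c v) + complex_of_real (c w) \<noteq> 0"
    using rate_pos[of v] rate_pos[of w] by (metis of_real_add of_real_eq_0_iff add_pos_pos less_irrefl)
  then show ?thesis
    using rate_pos[of w] rate_pos[of v]
    by (simp add: visit_kernel_def exp_fourier_add_cnj sum_exp_char_Suc field_simps)
qed

text \<open>The boundary terms of the recursion vanish: up to a constant they are products of at
  least two distinct factors \<open>exp_fourier (c k)\<close>.\<close>
lemma
  shows integrable_sum_exp_char_mult_exp_fourier:
      "integrable lborel (\<lambda>t. sum_exp_char (Suc u) t * exp_fourier (c (Suc u)) t)"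
    and lborel_integral_sum_exp_char_mult_exp_fourier:
      "(LINT t|lborel. sum_exp_char (Suc u) t * exp_fourier (c (Suc u)) t) = 0"
proof -
  have split: "sum_exp_char (Suc u) t * exp_fourier (c (Suc u)) t
      = of_real (\<Prod>k<Suc u. c k) * (\<Prod>k\<in>{..Suc u}. exp_fourier (c k) t)" for t
    unfolding sum_exp_char_def prod.distrib
    by (simp add: lessThan_Suc_atMost[symmetric] ac_simps)
  have "integrable lborel (\<lambda>t. \<Prod>k\<in>{..Suc u}. exp_fourier (c k) t)"
    by (intro integrable_prod_exp_fourier rate_ge_1) auto
  then show "integrable lborel (\<lambda>t. sum_exp_char (Suc u) t * exp_fourier (c (Suc u)) t)"
    unfolding split by simp
  have "(LINT t|lborel. (\<Prod>k\<in>{..Suc u}. exp_fourier (c k) t)) = 0"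
    using inj_rate by (intro lborel_integral_prod_exp_fourier_eq_0 rate_ge_1) (auto intro: inj_on_subset)
  then show "(LINT t|lborel. sum_exp_char (Suc u) t * exp_fourier (c (Suc u)) t) = 0"
    unfolding split by simp
qed

lemma
  shows integrable_cnj_sum_exp_char_mult_exp_fourier:
      "integrable lborel (\<lambda>t. cnj (sum_exp_char (Suc u) t) * cnj (exp_fourier (c (Suc u)) t))"
    and lborel_integral_cnj_sum_exp_char_mult_exp_fourier:
      "(LINT t|lborel. cnj (sum_exp_char (Suc u) t) * cnj (exp_fourier (c (Suc u)) t)) = 0"
  using integrable_cnj[OF integrable_sum_exp_char_mult_exp_fourier[of u]]
    Bochner_Integration.integral_cnj[of lborel "\<lambda>t. sum_exp_char (Suc u) t * exp_fourier (c (Suc u)) t"]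
  by (simp_all add: lborel_integral_sum_exp_char_mult_exp_fourier)

lemma lborel_integral_visit_kernel: "(LINT t|lborel. visit_kernel u v t) = of_real (2 * pi * visit_prob u v)"
proof (induction u v rule: visit_prob.induct)
  case 1
  show ?case
    using lborel_integral_visit_kernel_0_0 by simp
next
  case (2 u)
  have "visit_kernel (Suc u) 0 t
      = of_real (c u / (c u + c 0)) * visit_kernel u 0 t + sum_exp_char (Suc u) t * exp_fourier (c (Suc u)) t" for t
    unfolding visit_kernel_right by (simp add: visit_kernel_def algebra_simps)
  then show ?case
    using 2 integrable_visit_kernel integrable_sum_exp_char_mult_exp_fourier
      lborel_integral_sum_exp_char_mult_exp_fourier
    by simp
next
  case (3 v)
  have "visit_kernel 0 (Suc v) t
      = of_real (c v / (c 0 + c v)) * visit_kernel 0 v t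
        + cnj (sum_exp_char (Suc v) t) * cnj (exp_fourier (c (Suc v)) t)" for t
    unfolding visit_kernel_up by (simp add: visit_kernel_def algebra_simps)
  then show ?case
    using 3 integrable_visit_kernel integrable_cnj_sum_exp_char_mult_exp_fourier
      lborel_integral_cnj_sum_exp_char_mult_exp_fourier
    by simp
next
  case (4 u v)
  have "visit_kernel (Suc u) (Suc v) t
      = of_real (c u / (c u + c (Suc v))) * visit_kernel u (Suc v) t
        + of_real (c v / (c (Suc u) + c v)) * visit_kernel (Suc u) v t" for t
    unfolding visit_kernel_right visit_kernel_up by (simp add: visit_kernel_def algebra_simps)
  then show ?case
    using 4 integrable_visit_kernel by (simp add: algebra_simps)
qed

lemma visit_kernel_split:
  "visit_kernel u v t = sum_exp_char (Suc u) t * cnj (sum_exp_char v t) / of_real (c u)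
     + sum_exp_char u t * cnj (sum_exp_char (Suc v) t) / of_real (c v)"
  using rate_pos[of u] rate_pos[of v]
  by (simp add: visit_kernel_def sum_exp_char_Suc field_simps)

definition cross_integral :: "nat \<Rightarrow> nat \<Rightarrow> real" where
  "cross_integral m n = Re (LINT t|lborel. sum_exp_char m t * cnj (sum_exp_char n t))"

lemma visit_prob_eq_cross_integral:
  assumes "1 \<le> u" "1 \<le> v"
  shows "visit_prob u v = (cross_integral (Suc u) v / c u + cross_integral u (Suc v) / c v) / (2 * pi)"
proof -
  have "of_real (2 * pi * visit_prob u v) = (LINT t|lborel. visit_kernel u v t)"
    by (rule lborel_integral_visit_kernel[symmetric])
  also have "\<dots> = (LINT t|lborel. sum_exp_char (Suc u) t * cnj (sum_exp_char v t)) / of_real (c u)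
        + (LINT t|lborel. sum_exp_char u t * cnj (sum_exp_char (Suc v) t)) / of_real (c v)"
    using assms by (simp add: visit_kernel_split integrable_sum_exp_char_mult_cnj)
  finally have "2 * pi * visit_prob u v = cross_integral (Suc u) v / c u + cross_integral u (Suc v) / c v"
    unfolding cross_integral_def by (metis Re_complex_of_real Re_divide_of_real plus_complex.sel(1))
  then show ?thesis
    by (simp add: field_simps)
qed

end

section \<open>Convergence for summable inverse rates\<close>

locale summable_rate_sequence = rate_sequence +
  assumes summable_inverse_rate: "summable (\<lambda>k. 1 / c k)"
begin

lemma convergent_prod_if_close_to_1:
  fixes f :: "nat \<Rightarrow> 'a :: {real_normed_div_algebra, complete_space, comm_ring_1}"
  assumes "\<And>k. norm (f k - 1) \<le> C / c k"
  shows "convergent_prod f"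
proof -
  have "summable (\<lambda>k. C * (1 / c k))"
    by (rule summable_mult[OF summable_inverse_rate])
  then have "summable (\<lambda>k. norm (f k - 1))"
    by (rule summable_comparison_test'[where N = 0]) (use assms in simp)
  then show ?thesis
    by (intro abs_convergent_prod_imp_convergent_prod summable_imp_abs_convergent_prod)
qed

definition sum_exp_char_limit :: "real \<Rightarrow> complex" where
  "sum_exp_char_limit t = (\<Prod>k. of_real (c k) * exp_fourier (c k) t)"

lemma convergent_prod_scaled_exp_fourier: "convergent_prod (\<lambda>k. of_real (c k) * exp_fourier (c k) t)"
  by (rule convergent_prod_if_close_to_1[where C = "\<bar>t\<bar>"])
     (intro norm_scaled_exp_fourier_minus_1_le rate_pos)

lemma sum_exp_char_LIMSEQ: "(\<lambda>m. sum_exp_char m t) \<longlonglongrightarrow> sum_exp_char_limit t"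
  unfolding sum_exp_char_def sum_exp_char_limit_def
  using convergent_prod_LIMSEQ[OF convergent_prod_scaled_exp_fourier]
  by (simp add: LIMSEQ_lessThan_iff_atMost)

lemma sum_exp_char_limit_nonzero: "sum_exp_char_limit t \<noteq> 0"
proof -
  have "of_real (c k) * exp_fourier (c k) t \<noteq> 0" for k
    using rate_pos[of k] exp_fourier_denominator_nonzero[OF rate_pos[of k], of t]
    by (simp add: exp_fourier_def)
  then show ?thesis
    unfolding sum_exp_char_limit_def by (intro prodinf_nonzero convergent_prod_scaled_exp_fourier)
qed

lemma borel_measurable_sum_exp_char_limit [measurable]: "sum_exp_char_limit \<in> borel_measurable borel"
  by (rule borel_measurable_LIMSEQ_metric[OF _ sum_exp_char_LIMSEQ]) simp

lemma norm_sum_exp_char_limit_le_1: "norm (sum_exp_char_limit t) \<le> 1"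
  by (rule tendsto_upperbound[OF tendsto_norm[OF sum_exp_char_LIMSEQ]])
     (simp_all add: norm_sum_exp_char_le_1)

lemma norm_sum_exp_char_limit_le: "norm (sum_exp_char_limit t) \<le> c 0 * c 1 / (1 + t\<^sup>2)"
proof (rule tendsto_upperbound[OF tendsto_norm[OF sum_exp_char_LIMSEQ]])
  show "\<forall>\<^sub>F m in sequentially. norm (sum_exp_char m t) \<le> c 0 * c 1 / (1 + t\<^sup>2)"
    using norm_sum_exp_char_le by (rule eventually_sequentiallyI)
qed simp

text \<open>The density \<open>\<prod>\<^sub>k c\<^sub>k\<^sup>2 / (c\<^sub>k\<^sup>2 + t\<^sup>2)\<close> whose integral is \<open>2\<pi>\<beta>\<close>.\<close>
definition limit_density :: "real \<Rightarrow> real" where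
  "limit_density t = (\<Prod>k. (c k)\<^sup>2 / ((c k)\<^sup>2 + t\<^sup>2))"

lemma limit_density_eq_norm_sum_exp_char_limit: "limit_density t = (norm (sum_exp_char_limit t))\<^sup>2"
proof -
  let ?f = "\<lambda>k. (c k)\<^sup>2 / ((c k)\<^sup>2 + t\<^sup>2)"
  have factor: "(norm (of_real (c k) * exp_fourier (c k) t))\<^sup>2 = ?f k" for k
    using rate_pos[of k] by (simp add: norm_mult norm_exp_fourier power_mult_distrib power_divide)
  have partial: "(norm (sum_exp_char m t))\<^sup>2 = (\<Prod>k<m. ?f k)" for m
    unfolding sum_exp_char_def prod_norm[symmetric] prod_power_distrib factor ..
  have "convergent_prod ?f"
    by (rule convergent_prod_if_close_to_1[where C = "t\<^sup>2"])
       (simp add: square_ratio_minus_1_le rate_ge_1)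
  then have "(\<lambda>m. (norm (sum_exp_char m t))\<^sup>2) \<longlonglongrightarrow> limit_density t"
    unfolding partial limit_density_def by (simp add: convergent_prod_LIMSEQ LIMSEQ_lessThan_iff_atMost)
  moreover have "(\<lambda>m. (norm (sum_exp_char m t))\<^sup>2) \<longlonglongrightarrow> (norm (sum_exp_char_limit t))\<^sup>2"
    by (intro tendsto_power tendsto_norm sum_exp_char_LIMSEQ)
  ultimately show ?thesis
    by (rule LIMSEQ_unique)
qed

lemma limit_density_pos: "0 < limit_density t"
  using sum_exp_char_limit_nonzero by (simp add: limit_density_eq_norm_sum_exp_char_limit)

lemma integrable_limit_density: "integrable lborel limit_density"
proof (rule Bochner_Integration.integrable_bound)
  show "integrable lborel (\<lambda>t. c 0 * c 1 * (1 / (1 + t\<^sup>2)))"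
    by (intro integrable_mult_right integrable_inverse_1_plus_square_lborel)
  have "(norm (sum_exp_char_limit t))\<^sup>2 \<le> norm (sum_exp_char_limit t)" for t
    using norm_sum_exp_char_limit_le_1 by (simp add: power2_eq_square mult_left_le)
  then show "AE t in lborel. norm (limit_density t) \<le> norm (c 0 * c 1 * (1 / (1 + t\<^sup>2)))"
    using norm_sum_exp_char_limit_le limit_density_pos rate_pos[of 0] rate_pos[of 1]
    by (auto simp: limit_density_eq_norm_sum_exp_char_limit add_pos_nonneg intro: order_trans)
qed (simp add: limit_density_eq_norm_sum_exp_char_limit[abs_def])

lemma lborel_integral_limit_density_pos: "0 < (LINT t|lborel. limit_density t)"
  by (intro lborel_integral_pos integrable_limit_density limit_density_pos)

lemma norm_sum_exp_char_diff_limit_le: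
  assumes "2 \<le> m"
  shows "norm (sum_exp_char m t - sum_exp_char_limit t) \<le> 2 * c 0 * c 1 * (1 / (1 + t\<^sup>2))"
proof -
  have "norm (sum_exp_char m t - sum_exp_char_limit t) \<le> norm (sum_exp_char m t) + norm (sum_exp_char_limit t)"
    by (rule norm_triangle_ineq4)
  also have "\<dots> \<le> 2 * c 0 * c 1 * (1 / (1 + t\<^sup>2))"
    using norm_sum_exp_char_le[OF assms, of t] norm_sum_exp_char_limit_le[of t] by simp
  finally show ?thesis .
qed

lemma integrable_norm_sum_exp_char_diff_limit:
  assumes "2 \<le> m"
  shows "integrable lborel (\<lambda>t. norm (sum_exp_char m t - sum_exp_char_limit t))"
proof (rule Bochner_Integration.integrable_bound)
  show "integrable lborel (\<lambda>t. 2 * c 0 * c 1 * (1 / (1 + t\<^sup>2)))"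
    by (intro integrable_mult_right integrable_inverse_1_plus_square_lborel)
  show "AE t in lborel. norm (norm (sum_exp_char m t - sum_exp_char_limit t))
      \<le> norm (2 * c 0 * c 1 * (1 / (1 + t\<^sup>2)))"
    using norm_sum_exp_char_diff_limit_le[OF assms] rate_pos[of 0] rate_pos[of 1]
    by (simp add: add_pos_nonneg)
qed measurable

definition sum_exp_char_L1_dist :: "nat \<Rightarrow> real" where
  "sum_exp_char_L1_dist m = (LINT t|lborel. norm (sum_exp_char m t - sum_exp_char_limit t))"

lemma sum_exp_char_L1_dist_LIMSEQ: "sum_exp_char_L1_dist \<longlonglongrightarrow> 0"
proof -
  let ?s = "\<lambda>m t. norm (sum_exp_char (m + 2) t - sum_exp_char_limit t)"
  have "(\<lambda>m. LINT t|lborel. ?s m t) \<longlonglongrightarrow> (LINT t|lborel. (\<lambda>_::real. 0) t)"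
  proof (rule Bochner_Integration.integral_dominated_convergence[where w = "\<lambda>t. 2 * c 0 * c 1 * (1 / (1 + t\<^sup>2))"])
    show "integrable lborel (\<lambda>t. 2 * c 0 * c 1 * (1 / (1 + t\<^sup>2)))"
      by (intro integrable_mult_right integrable_inverse_1_plus_square_lborel)
    show "AE t in lborel. (\<lambda>m. ?s m t) \<longlonglongrightarrow> 0"
    proof
      fix t
      have "(\<lambda>m. sum_exp_char (m + 2) t) \<longlonglongrightarrow> sum_exp_char_limit t"
        using sum_exp_char_LIMSEQ by (rule LIMSEQ_ignore_initial_segment)
      then show "(\<lambda>m. ?s m t) \<longlonglongrightarrow> 0"
        by (simp add: tendsto_norm_zero_iff LIM_zero_iff)
    qed
    show "AE t in lborel. norm (?s m t) \<le> 2 * c 0 * c 1 * (1 / (1 + t\<^sup>2))" for m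
      using norm_sum_exp_char_diff_limit_le[of "m + 2"] by simp
  qed simp_all
  then show ?thesis
    unfolding sum_exp_char_L1_dist_def by (simp add: LIMSEQ_offset[where k = 2])
qed

lemma norm_sum_exp_char_mult_cnj_diff_le:
  "norm (sum_exp_char m t * cnj (sum_exp_char n t) - sum_exp_char_limit t * cnj (sum_exp_char_limit t))
     \<le> norm (sum_exp_char m t - sum_exp_char_limit t) + norm (sum_exp_char n t - sum_exp_char_limit t)"
proof -
  let ?A = "norm (sum_exp_char m t - sum_exp_char_limit t)"
  let ?B = "norm (sum_exp_char n t - sum_exp_char_limit t)"
  have "sum_exp_char m t * cnj (sum_exp_char n t) - sum_exp_char_limit t * cnj (sum_exp_char_limit t)
      = (sum_exp_char m t - sum_exp_char_limit t) * cnj (sum_exp_char n t)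
        + sum_exp_char_limit t * cnj (sum_exp_char n t - sum_exp_char_limit t)"
    by (simp add: algebra_simps)
  then have "norm (sum_exp_char m t * cnj (sum_exp_char n t) - sum_exp_char_limit t * cnj (sum_exp_char_limit t))
      \<le> ?A * norm (sum_exp_char n t) + norm (sum_exp_char_limit t) * ?B"
    by (metis norm_triangle_ineq norm_mult complex_mod_cnj)
  also have "\<dots> \<le> ?A * 1 + 1 * ?B"
    by (intro add_mono mult_left_mono mult_right_mono norm_sum_exp_char_le_1 norm_sum_exp_char_limit_le_1)
      simp_all
  finally show ?thesis
    by simp
qed

lemma abs_cross_integral_minus_limit_le:
  assumes "2 \<le> m" "2 \<le> n"
  shows "\<bar>cross_integral m n - (LINT t|lborel. limit_density t)\<bar> \<le> sum_exp_char_L1_dist m + sum_exp_char_L1_dist n"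
proof -
  let ?P = "\<lambda>t. sum_exp_char m t * cnj (sum_exp_char n t)"
  let ?Q = "\<lambda>t. sum_exp_char_limit t * cnj (sum_exp_char_limit t)"
  let ?A = "\<lambda>t. norm (sum_exp_char m t - sum_exp_char_limit t)"
  let ?B = "\<lambda>t. norm (sum_exp_char n t - sum_exp_char_limit t)"
  have Q: "?Q t = of_real (limit_density t)" for t
    unfolding limit_density_eq_norm_sum_exp_char_limit complex_norm_square ..
  have int_P: "integrable lborel ?P"
    using assms by (intro integrable_sum_exp_char_mult_cnj) auto
  have int_Q: "integrable lborel ?Q"
    unfolding Q using integrable_limit_density by simp
  have int_AB: "integrable lborel ?A" "integrable lborel ?B"
    using assms by (auto intro: integrable_norm_sum_exp_char_diff_limit)
  have "cross_integral m n - (LINT t|lborel. limit_density t) = Re (LINT t|lborel. ?P t - ?Q t)"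
    using int_P int_Q by (simp add: cross_integral_def Q)
  also have "\<bar>\<dots>\<bar> \<le> norm (LINT t|lborel. ?P t - ?Q t)"
    by (rule abs_Re_le_cmod)
  also have "\<dots> \<le> (LINT t|lborel. norm (?P t - ?Q t))"
    by (rule integral_norm_bound)
  also have "\<dots> \<le> (LINT t|lborel. ?A t + ?B t)"
    using int_P int_Q int_AB norm_sum_exp_char_mult_cnj_diff_le by (intro integral_mono) auto
  also have "\<dots> = sum_exp_char_L1_dist m + sum_exp_char_L1_dist n"
    using int_AB by (simp add: sum_exp_char_L1_dist_def)
  finally show ?thesis .
qed

lemma cross_integral_tendsto:
  "((\<lambda>(m, n). cross_integral m n) \<longlongrightarrow> (LINT t|lborel. limit_density t)) (sequentially \<times>\<^sub>F sequentially)"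
proof -
  let ?d = "sum_exp_char_L1_dist"
  have "((\<lambda>p. ?d (fst p) + ?d (snd p)) \<longlongrightarrow> 0 + 0) (sequentially \<times>\<^sub>F sequentially)"
    using sum_exp_char_L1_dist_LIMSEQ
    by (intro tendsto_add filterlim_compose[OF _ filterlim_fst] filterlim_compose[OF _ filterlim_snd])
  then have dist_lim: "((\<lambda>p. ?d (fst p) + ?d (snd p)) \<longlongrightarrow> 0) (sequentially \<times>\<^sub>F sequentially)"
    by simp
  have "\<forall>\<^sub>F p in sequentially \<times>\<^sub>F sequentially.
      norm ((\<lambda>(m, n). cross_integral m n) p - (LINT t|lborel. limit_density t)) \<le> ?d (fst p) + ?d (snd p)"
    unfolding eventually_prod_sequentially
    using abs_cross_integral_minus_limit_le by (intro exI[of _ 2]) simp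
  from Lim_null_comparison[OF this dist_lim] show ?thesis
    by (rule LIM_zero_cancel)
qed

lemma cross_integral_shifted_tendsto:
  "((\<lambda>p. cross_integral (fst p - a) (snd p - b)) \<longlongrightarrow> (LINT t|lborel. limit_density t))
     (sequentially \<times>\<^sub>F sequentially)"
proof -
  have "filterlim (\<lambda>p. (fst p - a, snd p - b)) (sequentially \<times>\<^sub>F sequentially) (sequentially \<times>\<^sub>F sequentially)"
    by (rule filterlim_Pair[OF filterlim_compose[OF filterlim_minus_const_nat_at_top filterlim_fst]
          filterlim_compose[OF filterlim_minus_const_nat_at_top filterlim_snd]])
  from filterlim_compose[OF cross_integral_tendsto this] show ?thesis
    by simp
qed

end

section \<open>The urn chain\<close>

definition urn_rate :: "real \<Rightarrow> nat \<Rightarrow> real" where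
  "urn_rate \<alpha> k = real (Suc k) powr \<alpha>"

lemma rate_sequence_urn_rate:
  assumes "0 < \<alpha>"
  shows "rate_sequence (urn_rate \<alpha>)"
proof
  show "1 \<le> urn_rate \<alpha> k" for k
    using assms by (simp add: urn_rate_def ge_one_powr_ge_zero)
  show "inj (urn_rate \<alpha>)"
    using assms by (intro strict_mono_imp_inj_on) (simp add: strict_mono_Suc_iff urn_rate_def powr_less_mono2)
qed

lemma summable_rate_sequence_urn_rate:
  assumes "1 < \<alpha>"
  shows "summable_rate_sequence (urn_rate \<alpha>)"
proof -
  have "summable (\<lambda>n. real n powr - \<alpha>)"
    using assms by (simp add: summable_real_powr_iff)
  then have "summable (\<lambda>k. real (Suc k) powr - \<alpha>)"
    by (subst summable_Suc_iff)
  then have "summable (\<lambda>k. 1 / urn_rate \<alpha> k)"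
    by (simp add: urn_rate_def powr_minus_divide)
  then show ?thesis
    using rate_sequence_urn_rate assms by (simp add: summable_rate_sequence_def summable_rate_sequence_axioms_def)
qed

lemma nonneg_divide_add_le_1:
  fixes a b :: real
  assumes "0 \<le> a" "0 \<le> b"
  shows "a / (a + b) \<le> 1"
proof (cases "a + b = 0")
  case False
  with assms have "0 < a + b"
    by linarith
  with assms show ?thesis
    by (simp add: divide_le_eq_1_pos)
qed simp

lemma
  fixes \<alpha> :: real and i j :: nat
  defines "p \<equiv> real i powr \<alpha> / (real i powr \<alpha> + real j powr \<alpha>)"
  shows set_pmf_urn_step: "set_pmf (urn_step \<alpha> (i, j)) \<subseteq> {(i + 1, j), (i, j + 1)}"
    and pmf_urn_step_right: "pmf (urn_step \<alpha> (i, j)) (i + 1, j) = p"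
    and pmf_urn_step_up: "0 < i \<Longrightarrow> pmf (urn_step \<alpha> (i, j)) (i, j + 1) = real j powr \<alpha> / (real i powr \<alpha> + real j powr \<alpha>)"
proof -
  let ?f = "\<lambda>b. if b then (i + 1, j) else (i, j + 1)"
  have urn_step: "urn_step \<alpha> (i, j) = map_pmf ?f (bernoulli_pmf p)"
    by (simp add: urn_step_def p_def)
  have inj: "inj ?f"
    by (auto simp: inj_def split: if_splits)
  have p: "0 \<le> p" "p \<le> 1"
    by (simp_all add: p_def nonneg_divide_add_le_1)
  show "set_pmf (urn_step \<alpha> (i, j)) \<subseteq> {(i + 1, j), (i, j + 1)}"
    by (auto simp: urn_step)
  show "pmf (urn_step \<alpha> (i, j)) (i + 1, j) = p"
    using pmf_map_inj'[OF inj, of _ True] p by (simp add: urn_step)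
  assume "0 < i"
  then have "0 < real i powr \<alpha> + real j powr \<alpha>"
    by (simp add: add_pos_nonneg)
  then have "1 - p = real j powr \<alpha> / (real i powr \<alpha> + real j powr \<alpha>)"
    by (simp add: p_def field_simps)
  then show "pmf (urn_step \<alpha> (i, j)) (i, j + 1) = real j powr \<alpha> / (real i powr \<alpha> + real j powr \<alpha>)"
    using pmf_map_inj'[OF inj, of _ False] p by (simp add: urn_step)
qed

text \<open>The forward equation: \<open>(a + 1, b + 1)\<close> can only be entered from \<open>(a, b + 1)\<close> or \<open>(a + 1, b)\<close>.\<close>
lemma pmf_bind_urn_step:
  "pmf (bind_pmf M (urn_step \<alpha>)) (Suc a, Suc b)
     = pmf M (a, Suc b) * (real a powr \<alpha> / (real a powr \<alpha> + real (Suc b) powr \<alpha>))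
       + pmf M (Suc a, b) * (real b powr \<alpha> / (real (Suc a) powr \<alpha> + real b powr \<alpha>))"
proof -
  have "pmf (bind_pmf M (urn_step \<alpha>)) (Suc a, Suc b) = (\<integral>s. pmf (urn_step \<alpha> s) (Suc a, Suc b) \<partial>M)"
    by (rule pmf_bind)
  also have "\<dots> = (\<Sum>s\<in>{(a, Suc b), (Suc a, b)}. pmf (urn_step \<alpha> s) (Suc a, Suc b) * pmf M s)"
  proof (rule integral_measure_pmf_real)
    fix s assume "pmf (urn_step \<alpha> s) (Suc a, Suc b) \<noteq> 0"
    then have "(Suc a, Suc b) \<in> set_pmf (urn_step \<alpha> s)"
      by (simp add: set_pmf_eq)
    then show "s \<in> {(a, Suc b), (Suc a, b)}"
      using set_pmf_urn_step[of \<alpha> "fst s" "snd s"] by auto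
  qed simp
  also have "\<dots> = pmf M (a, Suc b) * (real a powr \<alpha> / (real a powr \<alpha> + real (Suc b) powr \<alpha>))
       + pmf M (Suc a, b) * (real b powr \<alpha> / (real (Suc a) powr \<alpha> + real b powr \<alpha>))"
    using pmf_urn_step_right[of \<alpha> a "Suc b"] pmf_urn_step_up[of "Suc a" \<alpha> b] by (simp add: mult.commute)
  finally show ?thesis .
qed

lemma urn_paths_support:
  assumes "xs \<in> set_pmf (urn_paths \<alpha> (Suc (Suc m)))"
  shows "length xs = Suc m
    \<and> (\<forall>k<Suc m. fst (xs ! k) + snd (xs ! k) = k + 2 \<and> 1 \<le> fst (xs ! k) \<and> 1 \<le> snd (xs ! k))"
  using assms
proof (induction m arbitrary: xs)
  case (Suc m)
  from Suc.prems obtain ys s where ys: "ys \<in> set_pmf (urn_paths \<alpha> (Suc (Suc m)))"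
    and s: "s \<in> set_pmf (urn_step \<alpha> (last ys))" and xs: "xs = ys @ [s]"
    by auto
  note IH = Suc.IH[OF ys]
  obtain a b where ab: "last ys = (a, b)"
    by fastforce
  have "last ys = ys ! m"
    using IH by (cases ys rule: rev_cases) auto
  then have "a + b = m + 2" "1 \<le> a" "1 \<le> b"
    using IH ab by (metis fst_conv snd_conv lessI)+
  moreover have "s = (a + 1, b) \<or> s = (a, b + 1)"
    using s set_pmf_urn_step[of \<alpha> a b] ab by auto
  ultimately have "fst s + snd s = Suc m + 2 \<and> 1 \<le> fst s \<and> 1 \<le> snd s"
    by auto
  then show ?case
    using IH by (auto simp: xs nth_append less_Suc_eq)
qed simp

definition urn_state :: "real \<Rightarrow> nat \<Rightarrow> (nat \<times> nat) pmf" where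
  "urn_state \<alpha> n = map_pmf last (urn_paths \<alpha> n)"

lemma urn_state_Suc: "urn_state \<alpha> (Suc (Suc (Suc m))) = bind_pmf (urn_state \<alpha> (Suc (Suc m))) (urn_step \<alpha>)"
  by (simp add: urn_state_def map_bind_pmf bind_map_pmf map_pmf_comp)

lemma urn_state_support:
  assumes "s \<in> set_pmf (urn_state \<alpha> (Suc (Suc m)))"
  shows "fst s + snd s = m + 2 \<and> 1 \<le> fst s \<and> 1 \<le> snd s"
proof -
  obtain xs where xs: "xs \<in> set_pmf (urn_paths \<alpha> (Suc (Suc m)))" "s = last xs"
    using assms by (auto simp: urn_state_def)
  then have "s = xs ! m"
    using urn_paths_support[OF xs(1)] by (cases xs rule: rev_cases) auto
  then show ?thesis
    using urn_paths_support[OF xs(1)] by simp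
qed

lemma pmf_urn_state:
  assumes "0 < \<alpha>"
  shows "pmf (urn_state \<alpha> (u + v + 2)) (Suc u, Suc v) = rate_sequence.visit_prob (urn_rate \<alpha>) u v"
proof -
  interpret rate_sequence "urn_rate \<alpha>"
    using assms by (rule rate_sequence_urn_rate)
  have zero: "pmf (urn_state \<alpha> (Suc (Suc m))) (0, b) = 0" "pmf (urn_state \<alpha> (Suc (Suc m))) (a, 0) = 0"
    for m a b
    using urn_state_support[of "(0, b)" \<alpha> m] urn_state_support[of "(a, 0)" \<alpha> m]
    by (auto simp: pmf_eq_0_set_pmf)
  show ?thesis
  proof (induction u v rule: visit_prob.induct)
    case 1
    show ?case
      by (simp add: urn_state_def)
  next
    case (2 u)
    then show ?case
      using zero by (simp add: urn_state_Suc pmf_bind_urn_step) (simp add: urn_rate_def)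
  next
    case (3 v)
    then show ?case
      using zero by (simp add: urn_state_Suc pmf_bind_urn_step) (simp add: urn_rate_def)
  next
    case (4 u v)
    then show ?case
      by (simp add: urn_state_Suc pmf_bind_urn_step) (simp add: urn_rate_def)
  qed
qed

lemma visits_iff_nth:
  assumes "xs \<in> set_pmf (urn_paths \<alpha> (Suc (Suc m)))"
  shows "(Suc u, Suc v) \<in> set xs \<longleftrightarrow> u + v \<le> m \<and> xs ! (u + v) = (Suc u, Suc v)"
proof
  assume "(Suc u, Suc v) \<in> set xs"
  then obtain k where k: "k < length xs" "xs ! k = (Suc u, Suc v)"
    by (auto simp: in_set_conv_nth)
  then have "k < Suc m" "fst (xs ! k) + snd (xs ! k) = k + 2"
    using urn_paths_support[OF assms] by auto
  then show "u + v \<le> m \<and> xs ! (u + v) = (Suc u, Suc v)"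
    using k(2) by auto
next
  assume "u + v \<le> m \<and> xs ! (u + v) = (Suc u, Suc v)"
  then show "(Suc u, Suc v) \<in> set xs"
    using urn_paths_support[OF assms] by (metis le_imp_less_Suc nth_mem)
qed

lemma prob_visit_at_time:
  "measure_pmf.prob (urn_paths \<alpha> (Suc (Suc (u + v)))) {xs. (Suc u, Suc v) \<in> set xs}
     = pmf (urn_state \<alpha> (u + v + 2)) (Suc u, Suc v)"
proof -
  let ?M = "urn_paths \<alpha> (Suc (Suc (u + v)))"
  have "{xs. (Suc u, Suc v) \<in> set xs} \<inter> set_pmf ?M = last -` {(Suc u, Suc v)} \<inter> set_pmf ?M"
  proof -
    have "last xs = xs ! (u + v)" if "xs \<in> set_pmf ?M" for xs
      using urn_paths_support[OF that] by (cases xs rule: rev_cases) (auto simp: nth_append)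
    then show ?thesis
      using visits_iff_nth by auto
  qed
  then have "measure_pmf.prob ?M {xs. (Suc u, Suc v) \<in> set xs} = measure_pmf.prob ?M (last -` {(Suc u, Suc v)})"
    by (metis measure_Int_set_pmf)
  then show ?thesis
    by (simp add: urn_state_def pmf_map)
qed

lemma prob_visit_Suc:
  assumes "u + v \<le> m"
  shows "measure_pmf.prob (urn_paths \<alpha> (Suc (Suc (Suc m)))) {xs. (Suc u, Suc v) \<in> set xs}
       = measure_pmf.prob (urn_paths \<alpha> (Suc (Suc m))) {xs. (Suc u, Suc v) \<in> set xs}"
proof -
  let ?visits = "\<lambda>xs. (Suc u, Suc v) \<in> set xs"
  have "map_pmf ?visits (urn_paths \<alpha> (Suc (Suc (Suc m))))
      = bind_pmf (urn_paths \<alpha> (Suc (Suc m))) (\<lambda>xs. map_pmf (\<lambda>s. ?visits (xs @ [s])) (urn_step \<alpha> (last xs)))"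
    by (simp add: map_bind_pmf map_pmf_comp)
  also have "\<dots> = bind_pmf (urn_paths \<alpha> (Suc (Suc m))) (\<lambda>xs. return_pmf (?visits xs))"
  proof (intro bind_pmf_cong refl)
    fix xs assume xs: "xs \<in> set_pmf (urn_paths \<alpha> (Suc (Suc m)))"
    have "?visits (xs @ [s]) = ?visits xs" if "s \<in> set_pmf (urn_step \<alpha> (last xs))" for s
    proof -
      have "last xs = xs ! m"
        using urn_paths_support[OF xs] by (cases xs rule: rev_cases) auto
      then have "fst (last xs) + snd (last xs) = m + 2"
        using urn_paths_support[OF xs] by simp
      then have "s \<noteq> (Suc u, Suc v)"
        using that set_pmf_urn_step[of \<alpha> "fst (last xs)" "snd (last xs)"] assms by auto
      then show ?thesis
        by simp
    qed
    then show "map_pmf (\<lambda>s. ?visits (xs @ [s])) (urn_step \<alpha> (last xs)) = return_pmf (?visits xs)"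
      by (simp add: map_pmf_cong[OF refl, of _ _ "\<lambda>_. ?visits xs"])
  qed
  also have "\<dots> = map_pmf ?visits (urn_paths \<alpha> (Suc (Suc m)))"
    by (simp add: map_pmf_def)
  finally have "map_pmf ?visits (urn_paths \<alpha> (Suc (Suc (Suc m)))) = map_pmf ?visits (urn_paths \<alpha> (Suc (Suc m)))" .
  moreover have "measure_pmf.prob (urn_paths \<alpha> n) {xs. ?visits xs} = measure_pmf.prob (map_pmf ?visits (urn_paths \<alpha> n)) {True}" for n
    by (simp add: vimage_def)
  ultimately show ?thesis
    by metis
qed

lemma prob_visit:
  "measure_pmf.prob (urn_paths \<alpha> (Suc (Suc m))) {xs. (Suc u, Suc v) \<in> set xs}
     = (if u + v \<le> m then pmf (urn_state \<alpha> (u + v + 2)) (Suc u, Suc v) else 0)"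
proof (cases "u + v \<le> m")
  case True
  then show ?thesis
  proof (induction m rule: dec_induct)
    case base
    then show ?case
      using prob_visit_at_time by simp
  next
    case (step m)
    then show ?case
      using prob_visit_Suc[of u v m] by simp
  qed
next
  case False
  then have "{xs. (Suc u, Suc v) \<in> set xs} \<inter> set_pmf (urn_paths \<alpha> (Suc (Suc m))) = {}"
    using visits_iff_nth by blast
  then show ?thesis
    using False by (simp add: measure_pmf_zero_iff Int_commute)
qed

lemma bingo_prob_eq_pmf_urn_state: "bingo_prob \<alpha> (Suc u) (Suc v) = pmf (urn_state \<alpha> (u + v + 2)) (Suc u, Suc v)"
  unfolding bingo_prob_def
proof (rule cSup_eq_maximum)
  let ?P = "\<lambda>n. measure_pmf.prob (urn_paths \<alpha> n) {xs. (Suc u, Suc v) \<in> set xs}"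
  show "pmf (urn_state \<alpha> (u + v + 2)) (Suc u, Suc v) \<in> range ?P"
    using prob_visit[of \<alpha> "u + v" u v] by (auto intro!: range_eqI[of _ _ "Suc (Suc (u + v))"])
  have "?P n \<le> pmf (urn_state \<alpha> (u + v + 2)) (Suc u, Suc v)" for n
  proof -
    consider "n = 0" | "n = 1" | "2 \<le> n"
      by linarith
    then have "urn_paths \<alpha> n = urn_paths \<alpha> (Suc (Suc (n - 2)))"
      by cases (auto simp: Suc_diff_Suc numeral_2_eq_2)
    then show ?thesis
      using prob_visit[of \<alpha> "n - 2" u v] by simp
  qed
  then show "x \<le> pmf (urn_state \<alpha> (u + v + 2)) (Suc u, Suc v)" if "x \<in> range ?P" for x
    using that by auto
qed

section \<open>Asymptotics\<close>

lemma tendsto_convex_combination: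
  fixes f g w :: "'a \<Rightarrow> real"
  assumes "(f \<longlongrightarrow> L) F" "(g \<longlongrightarrow> L) F" "\<forall>\<^sub>F x in F. 0 \<le> w x \<and> w x \<le> 1"
  shows "((\<lambda>x. w x * f x + (1 - w x) * g x) \<longlongrightarrow> L) F"
proof -
  have err: "((\<lambda>x. \<bar>f x - L\<bar> + \<bar>g x - L\<bar>) \<longlongrightarrow> 0) F"
    using assms(1,2) by (intro tendsto_add_zero tendsto_rabs_zero LIM_zero)
  have "\<forall>\<^sub>F x in F. norm (w x * f x + (1 - w x) * g x - L) \<le> \<bar>f x - L\<bar> + \<bar>g x - L\<bar>"
    using assms(3)
  proof eventually_elim
    case (elim x)
    have "w x * f x + (1 - w x) * g x - L = w x * (f x - L) + (1 - w x) * (g x - L)"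
      by (simp add: algebra_simps)
    also have "\<bar>\<dots>\<bar> \<le> \<bar>w x * (f x - L)\<bar> + \<bar>(1 - w x) * (g x - L)\<bar>"
      by (rule abs_triangle_ineq)
    also have "\<dots> = w x * \<bar>f x - L\<bar> + (1 - w x) * \<bar>g x - L\<bar>"
      using elim by (simp add: abs_mult)
    also have "\<dots> \<le> 1 * \<bar>f x - L\<bar> + 1 * \<bar>g x - L\<bar>"
      using elim by (intro add_mono mult_right_mono) auto
    finally show ?case
      by simp
  qed
  from Lim_null_comparison[OF this err] show ?thesis
    by (rule LIM_zero_cancel)
qed

context
  fixes \<alpha> :: real
  assumes \<alpha>_gt_1: "1 < \<alpha>"
begin

interpretation summable_rate_sequence "urn_rate \<alpha>"
  using \<alpha>_gt_1 by (rule summable_rate_sequence_urn_rate)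

lemma bingo_beta_eq: "bingo_beta \<alpha> = (LINT t|lborel. limit_density t) / (2 * pi)"
proof -
  have "(urn_rate \<alpha> k)\<^sup>2 = real (Suc k) powr (2 * \<alpha>)" for k
    unfolding urn_rate_def by (subst powr_power) simp_all
  then show ?thesis
    by (simp only: bingo_beta_def limit_density_def) simp
qed

lemma bingo_prob_eq_cross_integral:
  assumes "2 \<le> i" "2 \<le> j"
  shows "bingo_prob \<alpha> i j
    = (real i powr - \<alpha> * cross_integral i (j - 1) + real j powr - \<alpha> * cross_integral (i - 1) j) / (2 * pi)"
proof -
  obtain u v where uv: "i = Suc u" "j = Suc v" "1 \<le> u" "1 \<le> v"
    using assms by (intro that[of "i - 1" "j - 1"]) auto
  have divide_rate: "x / urn_rate \<alpha> k = real (Suc k) powr - \<alpha> * x" for x k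
    by (simp add: urn_rate_def powr_minus_divide del: of_nat_Suc)
  have "bingo_prob \<alpha> i j = visit_prob u v"
    using pmf_urn_state[of \<alpha> u v] \<alpha>_gt_1 by (simp only: uv(1,2) bingo_prob_eq_pmf_urn_state)
  also have "\<dots> = (cross_integral (Suc u) v / urn_rate \<alpha> u + cross_integral u (Suc v) / urn_rate \<alpha> v) / (2 * pi)"
    using uv(3,4) by (rule visit_prob_eq_cross_integral)
  finally show ?thesis
    by (simp only: divide_rate uv(1,2) diff_Suc_1)
qed

lemma bingo_prob_div_eq_convex_combination:
  assumes "2 \<le> i" "2 \<le> j"
  defines "w \<equiv> real i powr - \<alpha> / (real i powr - \<alpha> + real j powr - \<alpha>)"
  shows "bingo_prob \<alpha> i j / (real i powr - \<alpha> + real j powr - \<alpha>)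
    = (w * cross_integral i (j - 1) + (1 - w) * cross_integral (i - 1) j) / (2 * pi)"
proof -
  let ?x = "real i powr - \<alpha>" and ?y = "real j powr - \<alpha>"
  have "0 < ?x + ?y"
    using assms(1) by (simp add: add_pos_nonneg)
  then have "1 - w = ?y / (?x + ?y)"
    by (simp add: w_def field_simps)
  then show ?thesis
    using assms(1,2)
    by (simp add: w_def bingo_prob_eq_cross_integral add_divide_distrib[symmetric] divide_divide_eq_left mult.commute)
qed

lemma bingo_prob_weighted_tendsto:
  "((\<lambda>p. bingo_prob \<alpha> (fst p) (snd p) / (real (fst p) powr - \<alpha> + real (snd p) powr - \<alpha>))
     \<longlongrightarrow> bingo_beta \<alpha>) (sequentially \<times>\<^sub>F sequentially)"
proof -
  define w where "w p = real (fst p) powr - \<alpha> / (real (fst p) powr - \<alpha> + real (snd p) powr - \<alpha>)" for p :: "nat \<times> nat"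
  have "\<forall>\<^sub>F p in sequentially \<times>\<^sub>F sequentially. 0 \<le> w p \<and> w p \<le> 1"
    by (intro always_eventually allI) (simp add: w_def nonneg_divide_add_le_1)
  with cross_integral_shifted_tendsto[of 0 1] cross_integral_shifted_tendsto[of 1 0]
  have "((\<lambda>p. (w p * cross_integral (fst p) (snd p - 1) + (1 - w p) * cross_integral (fst p - 1) (snd p)) / (2 * pi))
      \<longlongrightarrow> (LINT t|lborel. limit_density t) / (2 * pi)) (sequentially \<times>\<^sub>F sequentially)"
    by (intro tendsto_divide tendsto_const tendsto_convex_combination) simp_all
  moreover have "\<forall>\<^sub>F p in sequentially \<times>\<^sub>F sequentially.
      (w p * cross_integral (fst p) (snd p - 1) + (1 - w p) * cross_integral (fst p - 1) (snd p)) / (2 * pi)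
      = bingo_prob \<alpha> (fst p) (snd p) / (real (fst p) powr - \<alpha> + real (snd p) powr - \<alpha>)"
    unfolding eventually_prod_sequentially w_def
    using bingo_prob_div_eq_convex_combination by (intro exI[of _ 2]) simp
  ultimately show ?thesis
    by (simp add: Lim_transform_eventually bingo_beta_eq)
qed

end

theorem theoremt3:
  fixes \<alpha> :: real
  assumes "\<alpha> > 1"
  shows "0 < bingo_beta \<alpha>
    \<and> (\<lambda>(i, j). bingo_prob \<alpha> i j) \<sim>[sequentially \<times>\<^sub>F sequentially]
        (\<lambda>(i, j). bingo_beta \<alpha> * (real i powr (-\<alpha>) + real j powr (-\<alpha>)))
    \<and> (\<lambda>n. bingo_prob \<alpha> n n) \<sim>[sequentially] (\<lambda>n. 2 * bingo_beta \<alpha> * real n powr (-\<alpha>))"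
proof -
  interpret summable_rate_sequence "urn_rate \<alpha>"
    using assms by (rule summable_rate_sequence_urn_rate)
  have beta_pos: "0 < bingo_beta \<alpha>"
    using lborel_integral_limit_density_pos by (simp add: bingo_beta_eq[OF assms])
  have "(\<lambda>p. bingo_prob \<alpha> (fst p) (snd p)) \<sim>[sequentially \<times>\<^sub>F sequentially]
      (\<lambda>p. bingo_beta \<alpha> * (real (fst p) powr (-\<alpha>) + real (snd p) powr (-\<alpha>)))"
    using beta_pos by (intro asymp_equivI'_const bingo_prob_weighted_tendsto[OF assms]) simp
  then have pairs: "(\<lambda>(i, j). bingo_prob \<alpha> i j) \<sim>[sequentially \<times>\<^sub>F sequentially]
      (\<lambda>(i, j). bingo_beta \<alpha> * (real i powr (-\<alpha>) + real j powr (-\<alpha>)))"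
    by (simp add: case_prod_beta')
  have "(\<lambda>n. bingo_prob \<alpha> n n) \<sim>[sequentially] (\<lambda>n. bingo_beta \<alpha> * (real n powr (-\<alpha>) + real n powr (-\<alpha>)))"
    using asymp_equiv_compose'[OF pairs filterlim_Pair[OF filterlim_ident filterlim_ident]] by simp
  then have "(\<lambda>n. bingo_prob \<alpha> n n) \<sim>[sequentially] (\<lambda>n. 2 * bingo_beta \<alpha> * real n powr (-\<alpha>))"
    by (simp add: algebra_simps)
  with beta_pos pairs show ?thesis
    by blast
qed

end
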